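(* Define, for integers $n\ge 1$ and $0\le d\le n$, a set $\mathcal{M}(n,d)$ of subsets of $\{0,1\}^n$ recursively as follows. $\mathcal{M}(n,0)=\{\{v\}: v\in\{0,1\}^n\}$ and $\mathcal{M}(n,n)=\{\{0,1\}^n\}$. For $1\le d\le n-1$, $\mathcal{M}(n,d)$ consists of all classes obtained in the following way: choose $C\in\mathcal{M}(n-1,d)$ and $C'\in\mathcal{M}(n-1,d-1)$ with $C'\subset C$; let $C_1,\dots,C_k$ be the $C'$-connected components of $C$; choose $p=(p_1,\dots,p_k)\in\{0,1\}^k$; and form $$\big(C'\times\{0,1\}\big)\ \cup\ \bigcup_{q=1}^k C_q\times\{p_q\}\ \subseteq\{0,1\}^n.$$ Then for all $n\in\mathbb{N}$ and $d\in\{1,\dots,n\}$, $\mathcal{M}(n,d)$ is exactly the set of all maximum classes of VC-dimension $d$ in $\{0,1\}^n$.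
   Context: A concept class is a subset $C\subseteq\{0,1\}^n$. Its VC-dimension is the largest $m$ such that for some set $Y$ of $m$ coordinates the projection of $C$ onto $Y$ is all of $\{0,1\}^Y$. $C$ is called $d$-maximum (maximum of VC-dimension $d$) if $\mathrm{VC}(C)=d$ and $|C|=\sum_{i=0}^{d}\binom{n}{i}$. The one-inclusion graph $\Gamma(C)$ has vertex set $C$ and an edge between $u,v$ iff they differ in exactly one coordinate. A $d$-cube of $C$ is a set of $2^d$ points of $C$ that agree outside some set of $d$ coordinates and take all $2^d$ values on those coordinates (a $d$-dimensional face of $\{0,1\}^n$ contained in $C$). For $C'\subset C$, two $d$-cubes $Q_1,Q_2$ of $C$ are $C'$-connected if there is a path in $\Gamma(C)$ with one endpoint in $Q_1$ and the other in $Q_2$ that does not intersect $C'$; the $C'$-connected components of $C$ are the equivalence classes of $d$-cubes of $C$ under this relation, each regarded as the set of vertices of its cubes. $C\times\{b\}$ denotes $\{(c,b):c\in C\}\subseteq\{0,1\}^n$ for $C\subseteq\{0,1\}^{n-1}$. *)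

theory Defs
  imports "HOL-Library.FuncSet"
begin

text \<open>Points of the hypercube \<open>{0,1}^n\<close> are boolean lists of length n;
  coordinate i of x is x ! i (0-based).  \<open>C \<times> {b}\<close> appends b as the last coordinate.\<close>

definition cube :: "nat \<Rightarrow> bool list set" where
  "cube n = {x. length x = n}"

definition shatters :: "bool list set \<Rightarrow> nat set \<Rightarrow> bool" where
  "shatters C Y \<longleftrightarrow> (\<lambda>c. restrict (\<lambda>i. c ! i) Y) ` C = (Y \<rightarrow>\<^sub>E (UNIV :: bool set))"

definition vc_dim :: "nat \<Rightarrow> bool list set \<Rightarrow> nat" where
  "vc_dim n C = (GREATEST m. \<exists>Y. Y \<subseteq> {..<n} \<and> card Y = m \<and> shatters C Y)"

definition maximum_class :: "nat \<Rightarrow> nat \<Rightarrow> bool list set \<Rightarrow> bool" where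
  "maximum_class n d C \<longleftrightarrow> C \<subseteq> cube n \<and> vc_dim n C = d \<and> card C = (\<Sum>i\<le>d. n choose i)"

definition adjacent :: "bool list \<Rightarrow> bool list \<Rightarrow> bool" where
  "adjacent u v \<longleftrightarrow> length u = length v \<and> card {i. i < length u \<and> u ! i \<noteq> v ! i} = 1"

definition is_subcube :: "nat \<Rightarrow> nat \<Rightarrow> bool list set \<Rightarrow> bool list set \<Rightarrow> bool" where
  "is_subcube n d C Q \<longleftrightarrow> Q \<subseteq> C \<and>
     (\<exists>D b. D \<subseteq> {..<n} \<and> card D = d \<and> b \<in> cube n \<and>
            Q = {x \<in> cube n. \<forall>i<n. i \<notin> D \<longrightarrow> x ! i = b ! i})"

definition avoid_conn :: "bool list set \<Rightarrow> bool list set \<Rightarrow> bool list set \<Rightarrow> bool list set \<Rightarrow> bool" where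
  "avoid_conn C C' Q1 Q2 \<longleftrightarrow>
     (\<exists>u\<in>Q1. \<exists>v\<in>Q2. u \<in> C - C' \<and> v \<in> C - C' \<and>
        (\<lambda>x y. x \<in> C - C' \<and> y \<in> C - C' \<and> adjacent x y)\<^sup>*\<^sup>* u v)"

text \<open>C'-connected components of C (d-cubes in dimension n): equivalence classes of d-cubes
  under (the equivalence relation generated by) C'-connectedness, each as a vertex set.\<close>
definition components :: "nat \<Rightarrow> nat \<Rightarrow> bool list set \<Rightarrow> bool list set \<Rightarrow> bool list set set" where
  "components n d C C' =
     {\<Union>{Q2. (\<lambda>A B. is_subcube n d C A \<and> is_subcube n d C B \<and> avoid_conn C C' A B)\<^sup>*\<^sup>* Q Q2}
      | Q. is_subcube n d C Q}"

definition lift :: "bool list set \<Rightarrow> bool \<Rightarrow> bool list set" where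
  "lift C b = (\<lambda>c. c @ [b]) ` C"

fun M :: "nat \<Rightarrow> nat \<Rightarrow> bool list set set" where
  "M n d =
    (if d = 0 then {{v} | v. v \<in> cube n}
     else if d = n then {cube n}
     else if n < d then {}
     else {lift C' False \<union> lift C' True \<union> (\<Union>K\<in>components (n - 1) d C C'. lift K (p K))
           | C C' p. C \<in> M (n - 1) d \<and> C' \<in> M (n - 1) (d - 1) \<and> C' \<subseteq> C})"

end

theory Submission
  imports Defs
begin

text \<open>Split a class \<open>S\<close> of \<open>{0,1}\<^sup>n\<close> along the last coordinate into its projection \<open>C\<close> (the
  union of the two levels) and its reduction \<open>C'\<close> (their intersection), so that
  \<open>|S| = |C| + |C'|\<close>.  Maximum classes are exactly the classes meeting Sauer's bound
  \<open>\<Phi>(n, d) = \<Sum>i\<le>d. n choose i\<close>, and these are shattering-extremal: Pajor's inequality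
  (\<open>S\<close> shatters at least \<open>|S|\<close> sets) is an equality.  Extremality passes to fibres, which are
  therefore connected in the one-inclusion graph.

  The glued class has \<open>\<Phi>(n-1, d) + \<Phi>(n-1, d-1) = \<Phi>(n, d)\<close> points; a shattered \<open>(d+1)\<close>-set would
  contain the last coordinate, and connectivity of a fibre of \<open>C\<close> avoiding \<open>C'\<close> would then put
  points of both levels into one component.  Conversely, for a maximum \<open>S\<close> the projection and the
  reduction are maximum of dimensions \<open>d\<close> and \<open>d - 1\<close> by counting, and every point of
  \<open>C - C'\<close> has a single level.  That level is constant along edges (otherwise a two-point fibre
  would shatter three sets) and on \<open>d\<close>-cubes (one level of the fibre over a cube shatters its free
  coordinates), hence on components, so \<open>S\<close> arises by gluing.\<close>

lemma finite_cube [simp]: "finite (cube n)"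
proof -
  have "cube n = {xs. set xs \<subseteq> UNIV \<and> length xs = n}" by (auto simp: cube_def)
  then show ?thesis using finite_lists_length_eq[of "UNIV :: bool set" n] by simp
qed

lemma card_cube: "card (cube n) = 2 ^ n"
proof -
  have "cube n = {xs. set xs \<subseteq> UNIV \<and> length xs = n}" by (auto simp: cube_def)
  then show ?thesis using card_lists_length_eq[of "UNIV :: bool set" n] by simp
qed

lemma length_in_cube: "x \<in> cube n \<Longrightarrow> length x = n"
  unfolding cube_def by simp

lemma cube_eqI: "x \<in> cube n \<Longrightarrow> y \<in> cube n \<Longrightarrow> (\<And>i. i < n \<Longrightarrow> x ! i = y ! i) \<Longrightarrow> x = y"
  unfolding cube_def by (simp add: nth_equalityI)

lemma cube_Suc_iff: "x \<in> cube (Suc m) \<longleftrightarrow> (\<exists>y \<beta>. x = y @ [\<beta>] \<and> y \<in> cube m)"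
proof
  assume "x \<in> cube (Suc m)"
  then have l: "length x = Suc m" by (simp add: cube_def)
  then have "x = butlast x @ [last x]" by (metis append_butlast_last_id list.size(3) nat.distinct(1))
  moreover have "butlast x \<in> cube m" using l by (simp add: cube_def)
  ultimately show "\<exists>y \<beta>. x = y @ [\<beta>] \<and> y \<in> cube m" by blast
qed (auto simp: cube_def)

lemma adjacent_sym: "adjacent u v \<Longrightarrow> adjacent v u"
proof -
  assume a: "adjacent u v"
  then have l: "length u = length v" by (simp add: adjacent_def)
  have "{i. i < length v \<and> v ! i \<noteq> u ! i} = {i. i < length u \<and> u ! i \<noteq> v ! i}" using l by auto
  then show ?thesis using a l unfolding adjacent_def by simp
qed

lemma adjacent_list_update:
  assumes "x < length w" "\<not> w ! x"
  shows "adjacent w (w[x := True])"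
proof -
  have "{i. i < length w \<and> w ! i \<noteq> w[x := True] ! i} = {x}"
    using assms by (auto simp: nth_list_update)
  then show ?thesis unfolding adjacent_def by simp
qed

subsection \<open>Shattering and Pajor's lemma\<close>

lemma shatters_iff: "shatters F Y \<longleftrightarrow> (\<forall>a. \<exists>f\<in>F. \<forall>i\<in>Y. f ! i = a i)"
proof
  assume s: "shatters F Y"
  show "\<forall>a. \<exists>f\<in>F. \<forall>i\<in>Y. f ! i = a i"
  proof
    fix a :: "nat \<Rightarrow> bool"
    have "restrict a Y \<in> (\<lambda>c. restrict (\<lambda>i. c ! i) Y) ` F"
      using s unfolding shatters_def by (simp add: restrict_PiE_iff)
    then obtain f where "f \<in> F" "restrict a Y = restrict (\<lambda>i. f ! i) Y" by blast
    then show "\<exists>f\<in>F. \<forall>i\<in>Y. f ! i = a i" by (metis restrict_apply')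
  qed
next
  assume h: "\<forall>a. \<exists>f\<in>F. \<forall>i\<in>Y. f ! i = a i"
  show "shatters F Y" unfolding shatters_def
  proof
    show "(\<lambda>c. restrict (\<lambda>i. c ! i) Y) ` F \<subseteq> Y \<rightarrow>\<^sub>E UNIV" by auto
    show "Y \<rightarrow>\<^sub>E UNIV \<subseteq> (\<lambda>c. restrict (\<lambda>i. c ! i) Y) ` F"
    proof
      fix g :: "nat \<Rightarrow> bool" assume g: "g \<in> Y \<rightarrow>\<^sub>E UNIV"
      obtain f where f: "f \<in> F" "\<forall>i\<in>Y. f ! i = g i" using h by blast
      have "restrict (\<lambda>i. f ! i) Y = restrict g Y"
        using f(2) by (intro restrict_ext) simp
      then have "g = restrict (\<lambda>i. f ! i) Y" using PiE_restrict[OF g] by simp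
      then show "g \<in> (\<lambda>c. restrict (\<lambda>i. c ! i) Y) ` F" using f(1) by blast
    qed
  qed
qed

lemma shatters_mono: "shatters F Y \<Longrightarrow> Z \<subseteq> Y \<Longrightarrow> F \<subseteq> G \<Longrightarrow> shatters G Z"
  unfolding shatters_iff by (metis subsetD)

lemma shatters_empty [simp]: "shatters F {} \<longleftrightarrow> F \<noteq> {}"
  unfolding shatters_iff by auto

definition agree_outside :: "nat \<Rightarrow> nat set \<Rightarrow> bool list set \<Rightarrow> bool" where
  "agree_outside n I F \<longleftrightarrow>
     F \<subseteq> cube n \<and> I \<subseteq> {..<n} \<and> (\<forall>f\<in>F. \<forall>g\<in>F. \<forall>i<n. i \<notin> I \<longrightarrow> f ! i = g ! i)"

definition shattered_sets :: "nat set \<Rightarrow> bool list set \<Rightarrow> nat set set" where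
  "shattered_sets I F = {Y. Y \<subseteq> I \<and> shatters F Y}"

definition slice :: "nat \<Rightarrow> bool \<Rightarrow> bool list set \<Rightarrow> bool list set" where
  "slice x b F = {f \<in> F. f ! x = b}"

lemma finite_shattered_sets [simp]: "finite I \<Longrightarrow> finite (shattered_sets I F)"
  unfolding shattered_sets_def by (rule finite_subset[of _ "Pow I"]) auto

lemma agree_outside_finite: "agree_outside n I F \<Longrightarrow> finite F"
  unfolding agree_outside_def using finite_subset[OF _ finite_cube] by blast

lemma agree_outside_empty_subsingleton:
  assumes "agree_outside n {} F" "u \<in> F" "v \<in> F"
  shows "u = v"
proof (rule cube_eqI)
  show "u \<in> cube n" "v \<in> cube n" using assms unfolding agree_outside_def by blast+
  show "u ! i = v ! i" if "i < n" for i using assms that unfolding agree_outside_def by blast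
qed

lemma agree_outside_slice:
  assumes "agree_outside n (insert x I) F"
  shows "agree_outside n I (slice x b F)"
proof -
  have F: "F \<subseteq> cube n" "insert x I \<subseteq> {..<n}"
    and agree: "\<And>f g i. f \<in> F \<Longrightarrow> g \<in> F \<Longrightarrow> i < n \<Longrightarrow> i \<notin> insert x I \<Longrightarrow> f ! i = g ! i"
    using assms unfolding agree_outside_def by blast+
  have "f ! i = g ! i" if "f \<in> slice x b F" "g \<in> slice x b F" "i < n" "i \<notin> I" for f g i
  proof (cases "i = x")
    case True
    then show ?thesis using that(1,2) by (simp add: slice_def)
  next
    case False
    then show ?thesis using agree[of f g i] that by (simp add: slice_def)
  qed
  moreover have "slice x b F \<subseteq> cube n" using F(1) by (auto simp: slice_def)
  ultimately show ?thesis using F(2) unfolding agree_outside_def by blast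
qed

lemma card_slices: "finite F \<Longrightarrow> card F = card (slice x False F) + card (slice x True F)"
proof -
  assume "finite F"
  have "F = slice x False F \<union> slice x True F" "slice x False F \<inter> slice x True F = {}"
    by (auto simp: slice_def)
  moreover have "finite (slice x False F)" "finite (slice x True F)"
    using \<open>finite F\<close> by (simp_all add: slice_def)
  ultimately show ?thesis using card_Un_disjoint[of "slice x False F" "slice x True F"] by simp
qed

abbreviation shattered_by_slices :: "nat \<Rightarrow> nat set \<Rightarrow> bool list set \<Rightarrow> nat set set" where
  "shattered_by_slices x I F \<equiv>
     shattered_sets I (slice x False F) \<union> shattered_sets I (slice x True F) \<union>
     insert x ` (shattered_sets I (slice x False F) \<inter> shattered_sets I (slice x True F))"

lemma shattered_by_slices_subset:
  "shattered_by_slices x I F \<subseteq> shattered_sets (insert x I) F"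
proof -
  have slice: "shattered_sets I (slice x b F) \<subseteq> shattered_sets (insert x I) F" for b
    unfolding shattered_sets_def slice_def using shatters_mono by blast
  have both: "insert x Y \<in> shattered_sets (insert x I) F"
    if "Y \<in> shattered_sets I (slice x False F)" "Y \<in> shattered_sets I (slice x True F)" for Y
  proof -
    have "shatters F (insert x Y)" unfolding shatters_iff
    proof
      fix a :: "nat \<Rightarrow> bool"
      have "shatters (slice x (a x) F) Y" using that by (cases "a x") (auto simp: shattered_sets_def)
      then obtain f where "f \<in> slice x (a x) F" "\<forall>i\<in>Y. f ! i = a i" unfolding shatters_iff by blast
      then show "\<exists>f\<in>F. \<forall>i\<in>insert x Y. f ! i = a i" by (auto simp: slice_def)
    qed
    then show ?thesis using that by (auto simp: shattered_sets_def)
  qed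
  show ?thesis using slice both by blast
qed

lemma card_shattered_by_slices:
  assumes "x \<notin> I" "finite I"
  shows "card (shattered_by_slices x I F) =
    card (shattered_sets I (slice x False F)) + card (shattered_sets I (slice x True F))"
proof -
  let ?A = "shattered_sets I (slice x False F)" and ?B = "shattered_sets I (slice x True F)"
  have x: "x \<notin> Y" if "Y \<in> ?A \<union> ?B" for Y using that assms by (auto simp: shattered_sets_def)
  have inj: "inj_on (insert x) (?A \<inter> ?B)"
  proof (rule inj_onI)
    fix A B assume "A \<in> ?A \<inter> ?B" "B \<in> ?A \<inter> ?B" "insert x A = insert x B"
    moreover have "x \<notin> A" "x \<notin> B" using x calculation by auto
    ultimately show "A = B" by (metis Diff_insert_absorb)
  qed
  have "(?A \<union> ?B) \<inter> insert x ` (?A \<inter> ?B) = {}" using x by auto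
  then have "card (?A \<union> ?B \<union> insert x ` (?A \<inter> ?B)) = card (?A \<union> ?B) + card (insert x ` (?A \<inter> ?B))"
    using assms by (intro card_Un_disjoint) auto
  also have "\<dots> = card (?A \<union> ?B) + card (?A \<inter> ?B)" using inj card_image by metis
  also have "\<dots> = card ?A + card ?B" using card_Un_Int[of ?A ?B] assms by simp
  finally show ?thesis .
qed

theorem pajor: "finite I \<Longrightarrow> agree_outside n I F \<Longrightarrow> card F \<le> card (shattered_sets I F)"
proof (induction I arbitrary: F rule: finite_induct)
  case empty
  have "\<forall>u\<in>F. \<forall>v\<in>F. u = v" using agree_outside_empty_subsingleton[OF empty.prems] by blast
  then have "card F \<le> Suc 0"
    using card_le_Suc0_iff_eq[OF agree_outside_finite[OF empty.prems]] by blast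
  moreover have "shattered_sets {} F = {{}}" if "F \<noteq> {}"
    using that unfolding shattered_sets_def by auto
  ultimately show ?case by (cases "F = {}") simp_all
next
  case (insert x I)
  have "card F = card (slice x False F) + card (slice x True F)"
    by (rule card_slices[OF agree_outside_finite[OF insert.prems]])
  also have "\<dots> \<le> card (shattered_sets I (slice x False F)) + card (shattered_sets I (slice x True F))"
    using insert.IH agree_outside_slice[OF insert.prems] by (simp add: add_mono)
  also have "\<dots> = card (shattered_by_slices x I F)"
    using card_shattered_by_slices insert.hyps by metis
  also have "\<dots> \<le> card (shattered_sets (insert x I) F)"
    using shattered_by_slices_subset insert.hyps by (intro card_mono) simp_all
  finally show ?case .
qed

subsection \<open>Shattering-extremal classes\<close>

definition shatter_extremal :: "nat set \<Rightarrow> bool list set \<Rightarrow> bool" where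
  "shatter_extremal I F \<longleftrightarrow> card F = card (shattered_sets I F)"

text \<open>Pajor's inequality is tight for \<open>F\<close> only if it is tight at every step of its inductive proof.\<close>

lemma shatter_extremal_slices:
  assumes "finite I" "x \<notin> I" "agree_outside n (insert x I) F" "shatter_extremal (insert x I) F"
  shows "shatter_extremal I (slice x False F)" "shatter_extremal I (slice x True F)"
    and "shattered_sets (insert x I) F = shattered_by_slices x I F"
proof -
  let ?A = "shattered_sets I (slice x False F)" and ?B = "shattered_sets I (slice x True F)"
  have le0: "card (slice x False F) \<le> card ?A" and le1: "card (slice x True F) \<le> card ?B"
    by (rule pajor[OF assms(1) agree_outside_slice[OF assms(3)]])+
  have sub: "shattered_by_slices x I F \<subseteq> shattered_sets (insert x I) F"
    by (rule shattered_by_slices_subset)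
  have le: "card (shattered_by_slices x I F) \<le> card (shattered_sets (insert x I) F)"
    by (rule card_mono[OF _ sub]) (simp add: assms(1))
  have F: "card F = card (slice x False F) + card (slice x True F)"
    by (rule card_slices[OF agree_outside_finite[OF assms(3)]])
  have E: "card F = card (shattered_sets (insert x I) F)"
    using assms(4) unfolding shatter_extremal_def .
  have U: "card (shattered_by_slices x I F) = card ?A + card ?B"
    by (rule card_shattered_by_slices[OF assms(2,1)])
  have "card (slice x False F) = card ?A" using le0 le1 le F E U by linarith
  then show "shatter_extremal I (slice x False F)" unfolding shatter_extremal_def .
  have "card (slice x True F) = card ?B" using le0 le1 le F E U by linarith
  then show "shatter_extremal I (slice x True F)" unfolding shatter_extremal_def .
  have "card (shattered_by_slices x I F) = card (shattered_sets (insert x I) F)"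
    using le0 le1 le F E U by linarith
  with sub have "shattered_by_slices x I F = shattered_sets (insert x I) F"
    by (intro card_subset_eq) (simp_all add: assms(1))
  then show "shattered_sets (insert x I) F = shattered_by_slices x I F" by (rule sym)
qed

definition fibre :: "nat set \<Rightarrow> (nat \<Rightarrow> bool) \<Rightarrow> bool list set \<Rightarrow> bool list set" where
  "fibre Z a F = {f \<in> F. \<forall>z\<in>Z. f ! z = a z}"

lemma fibre_insert: "fibre (insert z Z) a F = slice z (a z) (fibre Z a F)"
  unfolding fibre_def slice_def by auto

lemma shatter_extremal_fibre:
  assumes "finite Z"
  shows "finite I \<Longrightarrow> Z \<subseteq> I \<Longrightarrow> agree_outside n I F \<Longrightarrow> shatter_extremal I F \<Longrightarrow>
    agree_outside n (I - Z) (fibre Z a F) \<and> shatter_extremal (I - Z) (fibre Z a F)"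
  using assms
proof (induction Z rule: finite_induct)
  case empty
  then show ?case by (simp add: fibre_def)
next
  case (insert z Z)
  have IH: "agree_outside n (I - Z) (fibre Z a F) \<and> shatter_extremal (I - Z) (fibre Z a F)"
    using insert.IH insert.prems by blast
  have e: "I - Z = insert z (I - insert z Z)" using insert.prems(2) insert.hyps(2) by blast
  have fin: "finite (I - insert z Z)" and z: "z \<notin> I - insert z Z" using insert.prems(1) by simp_all
  have ag: "agree_outside n (insert z (I - insert z Z)) (fibre Z a F)" using IH e by simp
  have se: "shatter_extremal (insert z (I - insert z Z)) (fibre Z a F)" using IH e by simp
  show ?case unfolding fibre_insert
    using agree_outside_slice[OF ag] shatter_extremal_slices(1,2)[OF fin z ag se] by (cases "a z") simp_all
qed

subsection \<open>Connectivity of shattering-extremal classes\<close>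

definition connected_in :: "bool list set \<Rightarrow> bool list \<Rightarrow> bool list \<Rightarrow> bool" where
  "connected_in F u v \<longleftrightarrow> (\<lambda>x y. x \<in> F \<and> y \<in> F \<and> adjacent x y)\<^sup>*\<^sup>* u v"

lemma connected_in_refl: "connected_in F u u"
  unfolding connected_in_def by simp

lemma connected_in_sym: "connected_in F u v \<Longrightarrow> connected_in F v u"
  unfolding connected_in_def
proof (induction rule: rtranclp_induct)
  case (step y z)
  then show ?case using adjacent_sym by (metis (mono_tags, lifting) converse_rtranclp_into_rtranclp)
qed simp

lemma connected_in_trans: "connected_in F u v \<Longrightarrow> connected_in F v w \<Longrightarrow> connected_in F u w"
  unfolding connected_in_def by (rule rtranclp_trans)

lemma connected_in_mono: "connected_in F u v \<Longrightarrow> F \<subseteq> G \<Longrightarrow> connected_in G u v"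
  unfolding connected_in_def
proof (induction rule: rtranclp_induct)
  case (step y z)
  have "(\<lambda>x y. x \<in> G \<and> y \<in> G \<and> adjacent x y)\<^sup>*\<^sup>* u y" using step.IH step.prems by blast
  moreover have "(\<lambda>x y. x \<in> G \<and> y \<in> G \<and> adjacent x y) y z" using step by blast
  ultimately show ?case by (rule rtranclp.rtrancl_into_rtrancl)
qed simp

lemma connected_in_adjacent: "u \<in> F \<Longrightarrow> v \<in> F \<Longrightarrow> adjacent u v \<Longrightarrow> connected_in F u v"
  unfolding connected_in_def by (simp add: r_into_rtranclp)

text \<open>If no edge of direction \<open>x\<close> lies in \<open>F\<close>, setting coordinate \<open>x\<close> to \<open>False\<close> is injective
  on \<open>F\<close>; the image then shatters only subsets of \<open>I\<close> that some slice already shatters, which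
  is too few by Pajor's lemma when both slices are nonempty.\<close>

lemma inj_on_reset:
  assumes "\<forall>w\<in>slice x False F. w[x := True] \<notin> F"
  shows "inj_on (\<lambda>f. f[x := False]) F"
proof (rule inj_onI)
  fix f g assume fg: "f \<in> F" "g \<in> F" "f[x := False] = g[x := False]"
  have eq: "f[x := b] = g[x := b]" for b using arg_cong[OF fg(3), of "\<lambda>h. h[x := b]"] by simp
  have reset: "h[x := h ! x] = h" for h :: "bool list" by simp
  show "f = g"
  proof (cases "f ! x = g ! x")
    case True
    have "f = f[x := f ! x]" by simp
    also have "\<dots> = g[x := g ! x]" using True eq by simp
    also have "\<dots> = g" by simp
    finally show ?thesis .
  next
    case False
    have contra: False
      if "h \<in> F" "k \<in> F" "\<not> h ! x" "k ! x" "h[x := True] = k[x := True]" for h k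
      using assms that reset[of k] unfolding slice_def by auto
    show ?thesis using contra[OF fg(1,2)] contra[OF fg(2,1)] False eq[of True] by (cases "f ! x") auto
  qed
qed

lemma agree_outside_reset:
  assumes "agree_outside n (insert x I) F"
  shows "agree_outside n I ((\<lambda>f. f[x := False]) ` F)"
proof -
  have F: "F \<subseteq> cube n" "insert x I \<subseteq> {..<n}"
    and agree: "\<And>f g i. f \<in> F \<Longrightarrow> g \<in> F \<Longrightarrow> i < n \<Longrightarrow> i \<notin> insert x I \<Longrightarrow> f ! i = g ! i"
    using assms unfolding agree_outside_def by blast+
  have agree_reset: "f[x := False] ! i = g[x := False] ! i"
    if "f \<in> F" "g \<in> F" "i < n" "i \<notin> I" for f g i
  proof (cases "i = x")
    case True
    then show ?thesis using that F unfolding cube_def by auto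
  next
    case False
    then show ?thesis using agree[OF that(1-3)] that(4) by simp
  qed
  have "\<forall>f'\<in>(\<lambda>f. f[x := False]) ` F. \<forall>g'\<in>(\<lambda>f. f[x := False]) ` F. \<forall>i<n. i \<notin> I \<longrightarrow> f' ! i = g' ! i"
    using agree_reset by blast
  moreover have "(\<lambda>f. f[x := False]) ` F \<subseteq> cube n" using F(1) unfolding cube_def by auto
  moreover have "I \<subseteq> {..<n}" using F(2) by blast
  ultimately show ?thesis unfolding agree_outside_def by blast
qed

lemma shatters_reset:
  assumes "shatters ((\<lambda>f. f[x := False]) ` F) Y" "x \<notin> Y"
  shows "shatters F Y"
  unfolding shatters_iff
proof
  fix a :: "nat \<Rightarrow> bool"
  obtain f where "f \<in> F" "\<forall>i\<in>Y. f[x := False] ! i = a i"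
    using assms(1) unfolding shatters_iff by blast
  moreover have "f[x := False] ! i = f ! i" if "i \<in> Y" for i
    using that assms(2) by (metis nth_list_update_neq)
  ultimately show "\<exists>f\<in>F. \<forall>i\<in>Y. f ! i = a i" by auto
qed

lemma shatter_extremal_edge:
  assumes "finite I" "x \<notin> I" "agree_outside n (insert x I) F" "shatter_extremal (insert x I) F"
    and "slice x False F \<noteq> {}" "slice x True F \<noteq> {}"
  shows "\<exists>w\<in>slice x False F. w[x := True] \<in> F"
proof (rule ccontr)
  assume no_edge: "\<not> (\<exists>w\<in>slice x False F. w[x := True] \<in> F)"
  let ?D = "(\<lambda>f. f[x := False]) ` F"
  let ?A = "shattered_sets I (slice x False F)" and ?B = "shattered_sets I (slice x True F)"
  have "\<forall>w\<in>slice x False F. w[x := True] \<notin> F" using no_edge by blast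
  then have "card ?D = card F" by (rule card_image[OF inj_on_reset])
  then have "card F = card ?D" by simp
  also have "\<dots> \<le> card (shattered_sets I ?D)"
    by (rule pajor[OF assms(1) agree_outside_reset[OF assms(3)]])
  also have "\<dots> \<le> card (?A \<union> ?B)"
  proof (rule card_mono)
    show "shattered_sets I ?D \<subseteq> ?A \<union> ?B"
    proof
      fix Y assume Y: "Y \<in> shattered_sets I ?D"
      then have "x \<notin> Y" using assms(2) unfolding shattered_sets_def by blast
      then have "Y \<in> shattered_sets (insert x I) F"
        using Y shatters_reset[of x F Y] unfolding shattered_sets_def by blast
      moreover have "Y \<notin> insert x ` S" for S using \<open>x \<notin> Y\<close> by blast
      ultimately show "Y \<in> ?A \<union> ?B" using shatter_extremal_slices(3)[OF assms(1-4)] by simp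
    qed
  qed (simp add: assms(1))
  also have "\<dots> < card ?A + card ?B"
  proof -
    have "{} \<in> ?A \<inter> ?B" using assms(5,6) unfolding shattered_sets_def by simp
    then have "0 < card (?A \<inter> ?B)" using assms(1) by (auto simp: card_gt_0_iff)
    then show ?thesis using card_Un_Int[of ?A ?B] assms(1) by simp
  qed
  also have "\<dots> = card F"
    using shatter_extremal_slices(1,2)[OF assms(1-4)] card_slices[OF agree_outside_finite[OF assms(3)], of x]
    unfolding shatter_extremal_def by simp
  finally show False by simp
qed

theorem shatter_extremal_connected:
  assumes "finite I" "agree_outside n I F" "shatter_extremal I F" "u \<in> F" "v \<in> F"
  shows "connected_in F u v"
  using assms
proof (induction I arbitrary: F u v rule: finite_induct)
  case empty
  have "u = v" by (rule agree_outside_empty_subsingleton[OF empty.prems(1,3,4)])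
  then show ?case by (simp add: connected_in_refl)
next
  case (insert x I)
  let ?F0 = "slice x False F" and ?F1 = "slice x True F"
  have within: "connected_in F a b" if "a \<in> slice x \<beta> F" "b \<in> slice x \<beta> F" for a b \<beta>
  proof -
    have se: "shatter_extremal I (slice x \<beta> F)"
      using shatter_extremal_slices(1,2)[OF insert.hyps(1,2) insert.prems(1,2)] by (cases \<beta>) simp_all
    have "connected_in (slice x \<beta> F) a b"
      by (rule insert.IH[OF agree_outside_slice[OF insert.prems(1)] se that])
    moreover have "slice x \<beta> F \<subseteq> F" by (auto simp: slice_def)
    ultimately show ?thesis by (rule connected_in_mono)
  qed
  have across: "connected_in F a b" if a: "a \<in> ?F0" and b: "b \<in> ?F1" for a b
  proof -
    have "?F0 \<noteq> {}" "?F1 \<noteq> {}" using a b by blast+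
    then obtain w where w: "w \<in> ?F0" "w[x := True] \<in> F"
      using shatter_extremal_edge[OF insert.hyps(1,2) insert.prems(1,2)] by blast
    have "w \<in> cube n" "x < n" using w(1) insert.prems(1) unfolding agree_outside_def slice_def by auto
    then have x: "x < length w" by (simp add: cube_def)
    then have w1: "w[x := True] \<in> ?F1" using w(2) by (simp add: slice_def)
    have "\<not> w ! x" "w \<in> F" using w(1) by (simp_all add: slice_def)
    then have "connected_in F w (w[x := True])"
      using connected_in_adjacent[OF _ w(2) adjacent_list_update[OF x]] by blast
    then show ?thesis
      using connected_in_trans[OF connected_in_trans[OF within[OF a w(1)]] within[OF w1 b]] by blast
  qed
  show ?case
  proof (cases "u ! x = v ! x")
    case True
    then show ?thesis using within[of u "u ! x" v] insert.prems(3,4) by (simp add: slice_def)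
  next
    case False
    then have "connected_in F u v \<or> connected_in F v u"
      using across[of u v] across[of v u] insert.prems(3,4) by (cases "u ! x") (auto simp: slice_def)
    then show ?thesis using connected_in_sym by blast
  qed
qed


subsection \<open>Sauer's bound and maximum classes\<close>

definition sauer_bound :: "nat \<Rightarrow> nat \<Rightarrow> nat" where
  "sauer_bound n d = (\<Sum>i\<le>d. n choose i)"

definition small_sets :: "nat \<Rightarrow> nat \<Rightarrow> nat set set" where
  "small_sets n d = {Y. Y \<subseteq> {..<n} \<and> card Y \<le> d}"

definition sauer_maximal :: "nat \<Rightarrow> nat \<Rightarrow> bool list set \<Rightarrow> bool" where
  "sauer_maximal n d C \<longleftrightarrow> C \<subseteq> cube n \<and>
     (\<forall>Y. Y \<subseteq> {..<n} \<longrightarrow> shatters C Y \<longrightarrow> card Y \<le> d) \<and> card C = sauer_bound n d"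

lemma sauer_maximal_subset_cube: "sauer_maximal n d C \<Longrightarrow> C \<subseteq> cube n"
  unfolding sauer_maximal_def by blast

lemma finite_small_sets [simp]: "finite (small_sets n d)"
  unfolding small_sets_def by (rule finite_subset[of _ "Pow {..<n}"]) auto

lemma card_small_sets: "card (small_sets n d) = sauer_bound n d"
proof -
  let ?S = "\<lambda>i. {Y. Y \<subseteq> {..<n} \<and> card Y = i}"
  have "small_sets n d = (\<Union>i\<in>{..d}. ?S i)" unfolding small_sets_def by auto
  moreover have "card (\<Union>i\<in>{..d}. ?S i) = (\<Sum>i\<le>d. card (?S i))"
  proof (rule card_UN_disjoint)
    show "\<forall>i\<in>{..d}. finite (?S i)"
      by (intro ballI, rule finite_subset[of _ "Pow {..<n}"]) auto
  qed auto
  ultimately show ?thesis unfolding sauer_bound_def using n_subsets[of "{..<n}"] by simp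
qed

lemma sauer_bound_0: "sauer_bound n 0 = 1"
  unfolding sauer_bound_def by simp

lemma sauer_bound_self: "sauer_bound n n = 2 ^ n"
  unfolding sauer_bound_def by (rule choose_row_sum)

lemma sauer_bound_Suc:
  assumes "0 < d"
  shows "sauer_bound (Suc m) d = sauer_bound m d + sauer_bound m (d - 1)"
proof -
  obtain e where e: "d = Suc e" using assms by (cases d) auto
  have "sauer_bound (Suc m) (Suc e) = (Suc m choose 0) + (\<Sum>i\<le>e. Suc m choose Suc i)"
    unfolding sauer_bound_def by (rule sum.atMost_Suc_shift)
  also have "\<dots> = 1 + (\<Sum>i\<le>e. m choose i) + (\<Sum>i\<le>e. m choose Suc i)"
    by (simp add: sum.distrib)
  also have "sauer_bound m (Suc e) = (m choose 0) + (\<Sum>i\<le>e. m choose Suc i)"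
    unfolding sauer_bound_def by (rule sum.atMost_Suc_shift)
  ultimately show ?thesis using e unfolding sauer_bound_def by simp
qed

lemma agree_outside_cube: "C \<subseteq> cube n \<Longrightarrow> agree_outside n {..<n} C"
  unfolding agree_outside_def by auto

theorem sauer_shelah:
  assumes "C \<subseteq> cube n" "\<forall>Y. Y \<subseteq> {..<n} \<longrightarrow> shatters C Y \<longrightarrow> card Y \<le> d"
  shows "card C \<le> sauer_bound n d"
proof -
  have "card C \<le> card (shattered_sets {..<n} C)"
    using pajor[OF _ agree_outside_cube[OF assms(1)]] by simp
  also have "\<dots> \<le> card (small_sets n d)"
    by (rule card_mono) (use assms(2) in \<open>auto simp: shattered_sets_def small_sets_def\<close>)
  finally show ?thesis using card_small_sets by simp
qed

text \<open>Pajor's inequality is squeezed between \<open>|C|\<close> and Sauer's bound, so a class attaining the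
  bound shatters exactly the small sets and is shattering-extremal.\<close>

lemma sauer_maximal_shattered_sets:
  assumes "sauer_maximal n d C"
  shows "shattered_sets {..<n} C = small_sets n d" "shatter_extremal {..<n} C"
proof -
  have C: "C \<subseteq> cube n" and card_C: "card C = sauer_bound n d"
    and sub: "shattered_sets {..<n} C \<subseteq> small_sets n d"
    using assms unfolding sauer_maximal_def shattered_sets_def small_sets_def by auto
  have "card C \<le> card (shattered_sets {..<n} C)"
    using pajor[OF _ agree_outside_cube[OF C]] by simp
  moreover have "card (shattered_sets {..<n} C) \<le> card (small_sets n d)"
    by (rule card_mono[OF finite_small_sets sub])
  ultimately have eq: "card (shattered_sets {..<n} C) = card (small_sets n d)"
    using card_C card_small_sets by simp
  then show "shattered_sets {..<n} C = small_sets n d"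
    using card_subset_eq[OF finite_small_sets sub] by simp
  show "shatter_extremal {..<n} C"
    unfolding shatter_extremal_def using eq card_C card_small_sets by simp
qed

lemma maximum_class_iff_sauer_maximal:
  assumes "d \<le> n"
  shows "maximum_class n d C \<longleftrightarrow> sauer_maximal n d C"
proof
  assume m: "maximum_class n d C"
  have "card Y \<le> d" if "Y \<subseteq> {..<n}" "shatters C Y" for Y
  proof -
    let ?P = "\<lambda>m. \<exists>Y. Y \<subseteq> {..<n} \<and> card Y = m \<and> shatters C Y"
    have "?P (card Y)" using that by blast
    moreover have "y \<le> n" if "?P y" for y
      using that card_mono[of "{..<n}"] by fastforce
    ultimately have "card Y \<le> Greatest ?P" by (rule Greatest_le_nat)
    then show ?thesis using m unfolding maximum_class_def vc_dim_def by simp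
  qed
  then show "sauer_maximal n d C"
    using m unfolding maximum_class_def sauer_maximal_def sauer_bound_def by blast
next
  assume m: "sauer_maximal n d C"
  have "{..<d} \<in> small_sets n d" using assms unfolding small_sets_def by auto
  then have s: "shatters C {..<d}"
    using sauer_maximal_shattered_sets(1)[OF m] unfolding shattered_sets_def by auto
  have "vc_dim n C = d" unfolding vc_dim_def
  proof (rule Greatest_equality)
    show "\<exists>Y\<subseteq>{..<n}. card Y = d \<and> shatters C Y" using s assms by (intro exI[of _ "{..<d}"]) auto
    show "\<And>y. \<exists>Y\<subseteq>{..<n}. card Y = y \<and> shatters C Y \<Longrightarrow> y \<le> d"
      using m unfolding sauer_maximal_def by blast
  qed
  then show "maximum_class n d C"
    using m unfolding maximum_class_def sauer_maximal_def sauer_bound_def by blast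
qed


definition face :: "nat \<Rightarrow> nat set \<Rightarrow> bool list \<Rightarrow> bool list set" where
  "face n D b = {x \<in> cube n. \<forall>i<n. i \<notin> D \<longrightarrow> x ! i = b ! i}"

lemma is_subcube_iff_face: "is_subcube n d C Q \<longleftrightarrow> Q \<subseteq> C \<and>
    (\<exists>D b. D \<subseteq> {..<n} \<and> card D = d \<and> b \<in> cube n \<and> Q = face n D b)"
  unfolding is_subcube_def face_def by simp

lemma mem_lift_iff: "z \<in> lift S \<beta> \<longleftrightarrow> (\<exists>y\<in>S. z = y @ [\<beta>])"
  unfolding lift_def by blast

lemma append_mem_lift_iff [simp]: "y @ [\<beta>] \<in> lift S \<gamma> \<longleftrightarrow> y \<in> S \<and> \<beta> = \<gamma>"
  unfolding lift_def by blast

lemma lift_face: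
  assumes D: "D \<subseteq> {..<m}" and b: "b \<in> cube m"
  shows "lift (face m D b) \<beta> = face (Suc m) D (b @ [\<beta>])"
proof (rule set_eqI)
  fix z
  have lb: "length b = m" using b by (rule length_in_cube)
  show "z \<in> lift (face m D b) \<beta> \<longleftrightarrow> z \<in> face (Suc m) D (b @ [\<beta>])"
  proof (cases "z \<in> cube (Suc m)")
    case True
    then obtain y \<gamma> where z: "z = y @ [\<gamma>]" and y: "y \<in> cube m" using cube_Suc_iff by blast
    have ly: "length y = m" using y by (rule length_in_cube)
    have "m \<notin> D" using D by blast
    then have "z \<in> face (Suc m) D (b @ [\<beta>]) \<longleftrightarrow> \<gamma> = \<beta> \<and> (\<forall>i<m. i \<notin> D \<longrightarrow> y ! i = b ! i)"
      using True ly lb unfolding z face_def by (auto simp: nth_append less_Suc_eq)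
    then show ?thesis using y unfolding z face_def by auto
  next
    case False
    then show ?thesis unfolding face_def mem_lift_iff by (auto simp: cube_def)
  qed
qed

lemma lift_face_both:
  assumes D: "D \<subseteq> {..<m}" and b: "b \<in> cube m"
  shows "lift (face m D b) False \<union> lift (face m D b) True = face (Suc m) (insert m D) (b @ [False])"
proof -
  have lb: "length b = m" using b by (rule length_in_cube)
  have "face (Suc m) (insert m D) (b @ [False]) =
        face (Suc m) D (b @ [False]) \<union> face (Suc m) D (b @ [True])"
  proof (rule set_eqI)
    fix z
    have "(b @ [\<beta>]) ! i = b ! i" if "i < m" for i \<beta> using that lb by (simp add: nth_append)
    moreover have "(b @ [\<beta>]) ! m = \<beta>" for \<beta> using lb by (simp add: nth_append)
    ultimately show "z \<in> face (Suc m) (insert m D) (b @ [False]) \<longleftrightarrow>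
        z \<in> face (Suc m) D (b @ [False]) \<union> face (Suc m) D (b @ [True])"
      unfolding face_def by (cases "z ! m") (auto simp: less_Suc_eq)
  qed
  then show ?thesis using lift_face[OF D b] by simp
qed

lemma is_subcube_lift:
  assumes "is_subcube m d C Q" "lift Q \<beta> \<subseteq> S"
  shows "is_subcube (Suc m) d S (lift Q \<beta>)"
proof -
  obtain D b where Db: "D \<subseteq> {..<m}" "card D = d" "b \<in> cube m" "Q = face m D b"
    using assms(1) unfolding is_subcube_iff_face by blast
  have "lift Q \<beta> = face (Suc m) D (b @ [\<beta>])" using lift_face[OF Db(1,3)] Db(4) by simp
  moreover have "D \<subseteq> {..<Suc m}" using Db(1) by auto
  moreover have "b @ [\<beta>] \<in> cube (Suc m)" using Db(3) cube_Suc_iff by blast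
  ultimately show ?thesis unfolding is_subcube_iff_face using assms(2) Db(2) by blast
qed

lemma is_subcube_lift_both:
  assumes "is_subcube m d C Q" "lift Q False \<union> lift Q True \<subseteq> S"
  shows "is_subcube (Suc m) (Suc d) S (lift Q False \<union> lift Q True)"
proof -
  obtain D b where Db: "D \<subseteq> {..<m}" "card D = d" "b \<in> cube m" "Q = face m D b"
    using assms(1) unfolding is_subcube_iff_face by blast
  have "lift Q False \<union> lift Q True = face (Suc m) (insert m D) (b @ [False])"
    using lift_face_both[OF Db(1,3)] Db(4) by simp
  moreover have "insert m D \<subseteq> {..<Suc m}" using Db(1) by auto
  moreover have "card (insert m D) = Suc d"
    using Db(1,2) finite_subset[OF Db(1)] by (subst card_insert_disjoint) auto
  moreover have "b @ [False] \<in> cube (Suc m)" using Db(3) cube_Suc_iff by blast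
  ultimately show ?thesis unfolding is_subcube_iff_face using assms(2) by blast
qed

lemma singleton_is_subcube:
  assumes "v \<in> C" "C \<subseteq> cube n"
  shows "is_subcube n 0 C {v}"
proof -
  have v: "v \<in> cube n" using assms by blast
  have "face n {} v = {v}"
    using cube_eqI[OF _ v] v unfolding face_def by auto
  then show ?thesis unfolding is_subcube_iff_face using assms v
    by (intro conjI exI[of _ "{}"] exI[of _ v]) auto
qed

lemma cube_is_subcube:
  assumes "v \<in> cube n"
  shows "is_subcube n n (cube n) (cube n)"
proof -
  have "face n {..<n} v = cube n" unfolding face_def by auto
  then show ?thesis unfolding is_subcube_iff_face using assms
    by (intro conjI exI[of _ "{..<n}"] exI[of _ v]) auto
qed

definition cube_link :: "nat \<Rightarrow> nat \<Rightarrow> bool list set \<Rightarrow> bool list set \<Rightarrow>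
    bool list set \<Rightarrow> bool list set \<Rightarrow> bool" where
  "cube_link n d C C' = (\<lambda>A B. is_subcube n d C A \<and> is_subcube n d C B \<and> avoid_conn C C' A B)"

lemma components_eq:
  "components n d C C' = {\<Union>{Q'. (cube_link n d C C')\<^sup>*\<^sup>* Q Q'} | Q. is_subcube n d C Q}"
  unfolding components_def cube_link_def by simp

lemma avoid_conn_iff:
  "avoid_conn C C' A B \<longleftrightarrow>
     (\<exists>u\<in>A. \<exists>v\<in>B. u \<in> C - C' \<and> v \<in> C - C' \<and> connected_in (C - C') u v)"
  unfolding avoid_conn_def connected_in_def by simp

lemma cube_link_sym: "cube_link n d C C' A B \<Longrightarrow> cube_link n d C C' B A"
  unfolding cube_link_def avoid_conn_iff using connected_in_sym by blast

lemma cube_link_rtranclp_sym: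
  "(cube_link n d C C')\<^sup>*\<^sup>* A B \<Longrightarrow> (cube_link n d C C')\<^sup>*\<^sup>* B A"
proof (induction rule: rtranclp_induct)
  case (step y z)
  have "cube_link n d C C' z y" using cube_link_sym[OF step.hyps(2)] .
  then show ?case using step.IH by (rule converse_rtranclp_into_rtranclp)
qed simp

lemma cube_link_rtranclp_subcube:
  "(cube_link n d C C')\<^sup>*\<^sup>* Q Q' \<Longrightarrow> is_subcube n d C Q \<Longrightarrow> is_subcube n d C Q'"
  by (induction rule: rtranclp_induct) (simp_all add: cube_link_def)

lemma mem_componentE:
  assumes "K \<in> components n d C C'" "y \<in> K"
  obtains Q Q' where "is_subcube n d C Q" "K = \<Union>{Q'. (cube_link n d C C')\<^sup>*\<^sup>* Q Q'}"
    "(cube_link n d C C')\<^sup>*\<^sup>* Q Q'" "y \<in> Q'" "is_subcube n d C Q'"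
proof -
  obtain Q where Q: "is_subcube n d C Q" "K = \<Union>{Q'. (cube_link n d C C')\<^sup>*\<^sup>* Q Q'}"
    using assms(1) unfolding components_eq by blast
  then obtain Q' where "(cube_link n d C C')\<^sup>*\<^sup>* Q Q'" "y \<in> Q'" using assms(2) by blast
  then show ?thesis using that Q cube_link_rtranclp_subcube by blast
qed

lemma component_subset: "K \<in> components n d C C' \<Longrightarrow> K \<subseteq> C"
proof
  fix y assume "K \<in> components n d C C'" "y \<in> K"
  then obtain Q' where "y \<in> Q'" "is_subcube n d C Q'" by (rule mem_componentE)
  then show "y \<in> C" unfolding is_subcube_def by blast
qed

lemma subcube_subset_component:
  assumes "is_subcube n d C Q"
  obtains K where "K \<in> components n d C C'" "Q \<subseteq> K"
proof -
  have "\<Union>{Q'. (cube_link n d C C')\<^sup>*\<^sup>* Q Q'} \<in> components n d C C'"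
    using assms unfolding components_eq by blast
  moreover have "Q \<subseteq> \<Union>{Q'. (cube_link n d C C')\<^sup>*\<^sup>* Q Q'}" by blast
  ultimately show ?thesis using that by blast
qed

lemma components_eqI:
  assumes K1: "K1 \<in> components n d C C'" and K2: "K2 \<in> components n d C C'"
    and y1: "y1 \<in> K1" "y1 \<notin> C'" and y2: "y2 \<in> K2" "y2 \<notin> C'"
    and path: "connected_in (C - C') y1 y2"
  shows "K1 = K2"
proof -
  let ?R = "cube_link n d C C'"
  obtain Q1 Qa where A: "K1 = \<Union>{Q. ?R\<^sup>*\<^sup>* Q1 Q}" "?R\<^sup>*\<^sup>* Q1 Qa" "y1 \<in> Qa" "is_subcube n d C Qa"
    using K1 y1(1) by (rule mem_componentE)
  obtain Q2 Qb where B: "K2 = \<Union>{Q. ?R\<^sup>*\<^sup>* Q2 Q}" "?R\<^sup>*\<^sup>* Q2 Qb" "y2 \<in> Qb" "is_subcube n d C Qb"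
    using K2 y2(1) by (rule mem_componentE)
  have "y1 \<in> C" "y2 \<in> C" using A(3,4) B(3,4) unfolding is_subcube_def by blast+
  then have "?R Qa Qb"
    unfolding cube_link_def avoid_conn_iff using A(3,4) B(3,4) y1(2) y2(2) path by blast
  then have "?R\<^sup>*\<^sup>* Q1 Qb" using A(2) by (rule rtranclp.rtrancl_into_rtrancl[rotated])
  then have Q12: "?R\<^sup>*\<^sup>* Q1 Q2" using cube_link_rtranclp_sym[OF B(2)] by (rule rtranclp_trans)
  have "?R\<^sup>*\<^sup>* Q1 Q \<longleftrightarrow> ?R\<^sup>*\<^sup>* Q2 Q" for Q
    using Q12 cube_link_rtranclp_sym[OF Q12] rtranclp_trans[of ?R] by metis
  then show ?thesis using A(1) B(1) by simp
qed

declare M.simps [simp del]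

definition glue :: "nat \<Rightarrow> nat \<Rightarrow> bool list set \<Rightarrow> bool list set \<Rightarrow>
    (bool list set \<Rightarrow> bool) \<Rightarrow> bool list set" where
  "glue m d C C' p = lift C' False \<union> lift C' True \<union> (\<Union>K\<in>components m d C C'. lift K (p K))"

lemma M_0: "M n 0 = {{v} | v. v \<in> cube n}"
  by (subst M.simps) simp

lemma M_diag: "0 < n \<Longrightarrow> M n n = {cube n}"
  by (subst M.simps) simp

lemma M_Suc:
  assumes "0 < d" "d < Suc m"
  shows "M (Suc m) d = {glue m d C C' p | C C' p. C \<in> M m d \<and> C' \<in> M m (d - 1) \<and> C' \<subseteq> C}"
  using assms unfolding glue_def by (subst M.simps) simp

lemma mem_glue_iff:
  "y @ [\<beta>] \<in> glue m d C C' p \<longleftrightarrow> y \<in> C' \<or> (\<exists>K\<in>components m d C C'. y \<in> K \<and> p K = \<beta>)"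
  unfolding glue_def by (cases \<beta>) auto

lemma glue_subset_cube:
  assumes "C \<subseteq> cube m" "C' \<subseteq> C"
  shows "glue m d C C' p \<subseteq> cube (Suc m)"
proof
  fix s assume "s \<in> glue m d C C' p"
  then obtain K \<beta> where "s \<in> lift K \<beta>" "K \<subseteq> C"
    unfolding glue_def using component_subset assms(2) by blast
  then obtain y where "y \<in> C" "s = y @ [\<beta>]" unfolding mem_lift_iff by blast
  then show "s \<in> cube (Suc m)" using assms(1) cube_Suc_iff by blast
qed

text \<open>Points of \<open>C'\<close> lift to the doubled \<open>(d-1)\<close>-cubes of \<open>C'\<close>, all other points to a
  \<open>d\<close>-cube in a component of \<open>C\<close>.\<close>

lemma glue_covered_by_subcubes:
  assumes "C' \<subseteq> C"
    and C: "\<And>y. y \<in> C \<Longrightarrow> \<exists>Q. is_subcube m d C Q \<and> y \<in> Q"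
    and C': "\<And>y. y \<in> C' \<Longrightarrow> \<exists>Q. is_subcube m (d - 1) C' Q \<and> y \<in> Q"
    and "0 < d" "c \<in> glue m d C C' p"
  shows "\<exists>Q. is_subcube (Suc m) d (glue m d C C' p) Q \<and> c \<in> Q"
proof (cases "\<exists>\<beta>. c \<in> lift C' \<beta>")
  case True
  then obtain \<beta> y where y: "y \<in> C'" "c = y @ [\<beta>]" unfolding mem_lift_iff by blast
  obtain Q where Q: "is_subcube m (d - 1) C' Q" "y \<in> Q" using C'[OF y(1)] by blast
  have "Q \<subseteq> C'" using Q(1) unfolding is_subcube_def by blast
  then have "lift Q False \<union> lift Q True \<subseteq> glue m d C C' p" unfolding glue_def lift_def by blast
  then have "is_subcube (Suc m) (Suc (d - 1)) (glue m d C C' p) (lift Q False \<union> lift Q True)"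
    using is_subcube_lift_both[OF Q(1)] by blast
  moreover have "c \<in> lift Q False \<union> lift Q True" using y(2) Q(2) by (cases \<beta>) auto
  ultimately show ?thesis using \<open>0 < d\<close> by auto
next
  case False
  then obtain K where K: "K \<in> components m d C C'" "c \<in> lift K (p K)"
    using assms(5) unfolding glue_def by blast
  then obtain y where y: "y \<in> K" "c = y @ [p K]" unfolding mem_lift_iff by blast
  obtain Q0 Q where "K = \<Union>{Q'. (cube_link m d C C')\<^sup>*\<^sup>* Q0 Q'}"
    "(cube_link m d C C')\<^sup>*\<^sup>* Q0 Q" "y \<in> Q" "is_subcube m d C Q"
    using K(1) y(1) by (rule mem_componentE)
  then have Q: "y \<in> Q" "is_subcube m d C Q" "Q \<subseteq> K" by blast+
  have "lift Q (p K) \<subseteq> glue m d C C' p" using Q(3) K(1) unfolding glue_def lift_def by blast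
  then have "is_subcube (Suc m) d (glue m d C C' p) (lift Q (p K))"
    using is_subcube_lift[OF Q(2)] by blast
  moreover have "c \<in> lift Q (p K)" using y Q(1) by simp
  ultimately show ?thesis by blast
qed

lemma M_covered_by_subcubes:
  "d \<le> n \<Longrightarrow> C \<in> M n d \<Longrightarrow> c \<in> C \<Longrightarrow> \<exists>Q. is_subcube n d C Q \<and> c \<in> Q"
proof (induction n arbitrary: d C c)
  case 0
  then have "C \<in> M 0 0" by simp
  then obtain v where "C = {v}" "v \<in> cube 0" unfolding M_0 by blast
  then have "is_subcube 0 d C {c}" using 0 singleton_is_subcube[of c C 0] by simp
  then show ?case by blast
next
  case (Suc m)
  consider "d = 0" | "d = Suc m" | "0 < d" "d < Suc m" using Suc.prems(1) by linarith
  then show ?case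
  proof cases
    case 1
    then have "C \<in> M (Suc m) 0" using Suc.prems(2) by simp
    then obtain v where "C = {v}" "v \<in> cube (Suc m)" unfolding M_0 by blast
    then have "is_subcube (Suc m) d C {c}" using 1 Suc.prems(3) singleton_is_subcube[of c C "Suc m"] by simp
    then show ?thesis by blast
  next
    case 2
    then have "C = cube (Suc m)" using Suc.prems(2) M_diag[of "Suc m"] by simp
    then show ?thesis using 2 Suc.prems(3) cube_is_subcube[of c "Suc m"] by blast
  next
    case 3
    then obtain C0 C'' p where C: "C = glue m d C0 C'' p"
      and M: "C0 \<in> M m d" "C'' \<in> M m (d - 1)" and sub: "C'' \<subseteq> C0"
      using Suc.prems(2) unfolding M_Suc[OF 3] by blast
    have "d \<le> m" "d - 1 \<le> m" using 3 by simp_all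
    have cov: "\<exists>Q. is_subcube m d C0 Q \<and> y \<in> Q" if "y \<in> C0" for y
      by (rule Suc.IH[OF \<open>d \<le> m\<close> M(1) that])
    have cov': "\<exists>Q. is_subcube m (d - 1) C'' Q \<and> y \<in> Q" if "y \<in> C''" for y
      by (rule Suc.IH[OF \<open>d - 1 \<le> m\<close> M(2) that])
    have "c \<in> glue m d C0 C'' p" using Suc.prems(3) C by simp
    with sub cov cov' 3(1) show ?thesis unfolding C by (rule glue_covered_by_subcubes)
  qed
qed


subsection \<open>Soundness of the construction\<close>

definition last_slice :: "bool \<Rightarrow> bool list set \<Rightarrow> bool list set" where
  "last_slice \<beta> S = {y. y @ [\<beta>] \<in> S}"

lemma last_slice_subset_cube: "S \<subseteq> cube (Suc m) \<Longrightarrow> last_slice \<beta> S \<subseteq> cube m"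
  unfolding last_slice_def cube_def by auto

lemma card_last_slices:
  assumes "S \<subseteq> cube (Suc m)"
  shows "card S = card (last_slice False S) + card (last_slice True S)"
proof -
  let ?S0 = "last_slice False S" and ?S1 = "last_slice True S"
  let ?L0 = "(\<lambda>y. y @ [False]) ` ?S0" and ?L1 = "(\<lambda>y. y @ [True]) ` ?S1"
  have fin: "finite ?S0" "finite ?S1"
    using last_slice_subset_cube[OF assms] finite_subset finite_cube by blast+
  have "S = ?L0 \<union> ?L1"
  proof
    show "S \<subseteq> ?L0 \<union> ?L1"
    proof
      fix s assume s: "s \<in> S"
      then obtain y \<beta> where "s = y @ [\<beta>]" using assms cube_Suc_iff by blast
      then show "s \<in> ?L0 \<union> ?L1" using s by (cases \<beta>) (auto simp: last_slice_def)
    qed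
  qed (auto simp: last_slice_def)
  then have "card S = card (?L0 \<union> ?L1)" by (rule arg_cong)
  also have "\<dots> = card ?L0 + card ?L1" using fin by (intro card_Un_disjoint) auto
  also have "\<dots> = card ?S0 + card ?S1" by (simp add: card_image inj_on_def)
  finally show ?thesis .
qed

lemma shatters_last_slices_iff:
  assumes "S \<subseteq> cube (Suc m)" "Y \<subseteq> {..<m}"
  shows "shatters S Y \<longleftrightarrow> shatters (last_slice False S \<union> last_slice True S) Y"
proof -
  have nth: "(y @ [\<beta>]) ! i = y ! i" if "y \<in> cube m" "i \<in> Y" for y \<beta> i
    using that assms(2) by (auto simp: nth_append cube_def)
  show ?thesis unfolding shatters_iff
  proof (intro iffI allI)
    fix a :: "nat \<Rightarrow> bool"
    assume "\<forall>a. \<exists>f\<in>S. \<forall>i\<in>Y. f ! i = a i"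
    then obtain s where s: "s \<in> S" "\<forall>i\<in>Y. s ! i = a i" by blast
    then obtain y \<beta> where y: "s = y @ [\<beta>]" "y \<in> cube m" using assms(1) cube_Suc_iff by blast
    then have "y \<in> last_slice False S \<union> last_slice True S"
      using s(1) by (cases \<beta>) (auto simp: last_slice_def)
    moreover have "\<forall>i\<in>Y. y ! i = a i" using s(2) y nth by simp
    ultimately show "\<exists>f\<in>last_slice False S \<union> last_slice True S. \<forall>i\<in>Y. f ! i = a i" by blast
  next
    fix a :: "nat \<Rightarrow> bool"
    assume "\<forall>a. \<exists>f\<in>last_slice False S \<union> last_slice True S. \<forall>i\<in>Y. f ! i = a i"
    then obtain y \<beta> where y: "y @ [\<beta>] \<in> S" "\<forall>i\<in>Y. y ! i = a i"
      unfolding last_slice_def by blast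
    then have "y \<in> cube m" using last_slice_subset_cube[OF assms(1), of \<beta>]
      unfolding last_slice_def by blast
    then show "\<exists>f\<in>S. \<forall>i\<in>Y. f ! i = a i" using y nth by (metis (no_types))
  qed
qed

lemma sauer_maximal_fibre_connected:
  assumes "sauer_maximal m d C" "Z \<subseteq> {..<m}" "u \<in> fibre Z a C" "v \<in> fibre Z a C"
  shows "connected_in (fibre Z a C) u v"
proof -
  have "C \<subseteq> cube m" using assms(1) by (rule sauer_maximal_subset_cube)
  then have "agree_outside m ({..<m} - Z) (fibre Z a C) \<and> shatter_extremal ({..<m} - Z) (fibre Z a C)"
    using shatter_extremal_fibre[OF finite_subset[OF assms(2)] _ assms(2)]
      agree_outside_cube sauer_maximal_shattered_sets(2)[OF assms(1)] by blast
  then show ?thesis using shatter_extremal_connected assms(3,4) by blast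
qed

context
  fixes m d :: nat and C C' :: "bool list set" and p :: "bool list set \<Rightarrow> bool"
  assumes sub: "C' \<subseteq> C"
    and covered: "\<And>y. y \<in> C \<Longrightarrow> \<exists>Q. is_subcube m d C Q \<and> y \<in> Q"
begin

lemma glue_last_slices:
  "last_slice False (glue m d C C' p) \<union> last_slice True (glue m d C C' p) = C"
  "last_slice False (glue m d C C' p) \<inter> last_slice True (glue m d C C' p) = C'"
proof -
  let ?S = "glue m d C C' p"
  have "y \<in> last_slice False ?S \<union> last_slice True ?S" if "y \<in> C" for y
  proof (cases "y \<in> C'")
    case False
    obtain Q where Q: "is_subcube m d C Q" "y \<in> Q" using covered[OF \<open>y \<in> C\<close>] by blast
    obtain K where "K \<in> components m d C C'" "Q \<subseteq> K" by (rule subcube_subset_component[OF Q(1)])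
    with Q(2) have "K \<in> components m d C C'" "y \<in> K" by blast+
    then show ?thesis by (cases "p K") (auto simp: last_slice_def mem_glue_iff)
  qed (simp add: last_slice_def mem_glue_iff)
  moreover have "y \<in> C" if "y \<in> last_slice \<beta> ?S" for y \<beta>
    using that sub component_subset unfolding last_slice_def mem_glue_iff by blast
  ultimately show "last_slice False ?S \<union> last_slice True ?S = C" by blast
  have "y \<in> C'" if y: "y \<in> last_slice False ?S" "y \<in> last_slice True ?S" for y
  proof (rule ccontr)
    assume "y \<notin> C'"
    then obtain K0 K1 where K: "K0 \<in> components m d C C'" "y \<in> K0" "\<not> p K0"
      "K1 \<in> components m d C C'" "y \<in> K1" "p K1"
      using y unfolding last_slice_def mem_glue_iff by blast
    then show False using components_eqI[OF K(1,4) K(2) \<open>y \<notin> C'\<close> K(5) \<open>y \<notin> C'\<close>]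
      connected_in_refl by blast
  qed
  then show "last_slice False ?S \<inter> last_slice True ?S = C'"
    by (auto simp: last_slice_def mem_glue_iff)
qed

lemma card_glue:
  assumes "C \<subseteq> cube m"
  shows "card (glue m d C C' p) = card C + card C'"
proof -
  let ?S = "glue m d C C' p"
  have "finite (last_slice False ?S)" "finite (last_slice True ?S)"
    using glue_last_slices(1) finite_subset[OF assms] by (metis finite_Un finite_cube)+
  then show ?thesis
    using card_last_slices[OF glue_subset_cube[OF assms sub]] glue_last_slices
      card_Un_Int[of "last_slice False ?S" "last_slice True ?S"] by simp
qed

lemma glue_shatters_insert_witness:
  assumes "C \<subseteq> cube m" "Y \<subseteq> {..<m}" "shatters (glue m d C C' p) (insert m Y)"
    and a: "\<forall>f\<in>C'. \<not> (\<forall>i\<in>Y. f ! i = a i)"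
  obtains y K where "y \<in> fibre Y a C" "y \<notin> C'" "K \<in> components m d C C'" "y \<in> K" "p K = \<beta>"
proof -
  let ?S = "glue m d C C' p"
  obtain s where s: "s \<in> ?S" "\<forall>i\<in>insert m Y. s ! i = (a(m := \<beta>)) i"
    using assms(3) unfolding shatters_iff by blast
  then obtain y \<gamma> where y: "s = y @ [\<gamma>]" "y \<in> cube m"
    using glue_subset_cube[OF assms(1) sub] cube_Suc_iff by blast
  have ly: "length y = m" using y(2) by (rule length_in_cube)
  have "\<gamma> = \<beta>" using s(2) y(1) ly by (simp add: nth_append)
  have "y ! i = a i" if "i \<in> Y" for i
  proof -
    have "i < m" using that assms(2) by blast
    then have "s ! i = a i" using s(2) that by simp
    moreover have "s ! i = y ! i" using y(1) ly \<open>i < m\<close> by (simp add: nth_append)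
    ultimately show ?thesis by simp
  qed
  moreover have "y \<in> last_slice False ?S \<union> last_slice True ?S"
    using s(1) y(1) by (cases \<gamma>) (simp_all add: last_slice_def)
  then have "y \<in> C" by (simp only: glue_last_slices(1))
  ultimately have "y \<in> fibre Y a C" "y \<notin> C'" using a unfolding fibre_def by blast+
  moreover have "y @ [\<beta>] \<in> ?S" using s(1) y(1) \<open>\<gamma> = \<beta>\<close> by simp
  then obtain K where "K \<in> components m d C C'" "y \<in> K" "p K = \<beta>"
    using \<open>y \<notin> C'\<close> unfolding mem_glue_iff by blast
  ultimately show ?thesis using that by blast
qed

text \<open>The pattern on \<open>Y\<close> that \<open>C'\<close> misses would be realised at both levels by points of
  \<open>C - C'\<close>; these are joined inside their fibre, hence lie in one component and get the same
  last bit.\<close>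

lemma glue_not_shatters:
  assumes "0 < d" "sauer_maximal m d C" "sauer_maximal m (d - 1) C'"
    and Y: "Y \<subseteq> {..<m}" "card Y = d"
  shows "\<not> shatters (glue m d C C' p) (insert m Y)"
proof
  assume shatters: "shatters (glue m d C C' p) (insert m Y)"
  have "\<not> shatters C' Y"
  proof
    assume "shatters C' Y"
    then have "card Y \<le> d - 1" using assms(3) Y(1) unfolding sauer_maximal_def by blast
    then show False using assms(1) Y(2) by simp
  qed
  then obtain a where a: "\<forall>f\<in>C'. \<not> (\<forall>i\<in>Y. f ! i = a i)" unfolding shatters_iff by blast
  note witness = glue_shatters_insert_witness[OF sauer_maximal_subset_cube[OF assms(2)] Y(1) shatters a]
  obtain y0 K0 where 0: "y0 \<in> fibre Y a C" "y0 \<notin> C'" "K0 \<in> components m d C C'" "y0 \<in> K0" "\<not> p K0"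
    by (rule witness[of False]) simp
  obtain y1 K1 where 1: "y1 \<in> fibre Y a C" "y1 \<notin> C'" "K1 \<in> components m d C C'" "y1 \<in> K1" "p K1"
    by (rule witness[of True]) simp
  have "fibre Y a C \<subseteq> C - C'" using a unfolding fibre_def by blast
  with sauer_maximal_fibre_connected[OF assms(2) Y(1) 0(1) 1(1)]
  have "connected_in (C - C') y0 y1" by (rule connected_in_mono)
  then have "K0 = K1" by (rule components_eqI[OF 0(3) 1(3) 0(4,2) 1(4,2)])
  then show False using 0(5) 1(5) by simp
qed

theorem sauer_maximal_glue:
  assumes "0 < d" "sauer_maximal m d C" "sauer_maximal m (d - 1) C'"
  shows "sauer_maximal (Suc m) d (glue m d C C' p)"
proof -
  let ?S = "glue m d C C' p"
  have C: "C \<subseteq> cube m" using assms(2) by (rule sauer_maximal_subset_cube)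
  have S: "?S \<subseteq> cube (Suc m)" using glue_subset_cube[OF C sub] .
  have card: "card ?S = sauer_bound (Suc m) d"
    using card_glue[OF C] assms sauer_bound_Suc unfolding sauer_maximal_def by simp
  have "card Y \<le> d" if Y: "Y \<subseteq> {..<Suc m}" "shatters ?S Y" for Y
  proof (cases "m \<in> Y")
    case False
    then have "Y \<subseteq> {..<m}" using Y(1) by (auto simp: less_Suc_eq)
    then show ?thesis
      using Y(2) assms(2) shatters_last_slices_iff[OF S] glue_last_slices(1)
      unfolding sauer_maximal_def by metis
  next
    case True
    show ?thesis
    proof (rule ccontr)
      assume "\<not> card Y \<le> d"
      then have "d \<le> card (Y - {m})" using finite_subset[OF Y(1)] True by simp
      then obtain Y' where Y': "Y' \<subseteq> Y - {m}" "card Y' = d" by (meson obtain_subset_with_card_n)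
      have "Y' \<subseteq> {..<m}"
      proof
        fix x assume "x \<in> Y'"
        then have "x \<in> Y" "x \<noteq> m" using Y'(1) by blast+
        then show "x \<in> {..<m}" using Y(1) by (auto simp: less_Suc_eq)
      qed
      moreover have "insert m Y' \<subseteq> Y" using Y'(1) True by blast
      ultimately show False
        using glue_not_shatters[OF assms \<open>Y' \<subseteq> {..<m}\<close> Y'(2)] shatters_mono[OF Y(2)] by blast
    qed
  qed
  then show ?thesis unfolding sauer_maximal_def using S card by blast
qed

end


subsection \<open>Completeness of the construction\<close>

lemma shatter_extremal_slice_shatters:
  assumes "finite D" "x \<notin> D" "agree_outside n (insert x D) G" "shatter_extremal (insert x D) G"
    and "shatters G D"
  obtains \<beta> where "shatters (slice x \<beta> G) D"
proof -
  have "D \<in> shattered_sets (insert x D) G" using assms(5) by (auto simp: shattered_sets_def)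
  then have "D \<in> shattered_by_slices x D G" by (simp only: shatter_extremal_slices(3)[OF assms(1-4)])
  moreover have "D \<notin> insert x ` X" for X using assms(2) by blast
  ultimately have "D \<in> shattered_sets D (slice x False G) \<union> shattered_sets D (slice x True G)"
    by blast
  then show ?thesis using that unfolding shattered_sets_def by blast
qed

lemma two_shattered_singletons:
  assumes "shatter_extremal {i, j} G" "i \<noteq> j" "u \<in> G" "v \<in> G"
    and "u ! i \<noteq> v ! i" "u ! j \<noteq> v ! j"
  shows "2 < card G"
proof -
  have "shatters G {k}" if "k \<in> {i, j}" for k
    unfolding shatters_iff
  proof
    fix a :: "nat \<Rightarrow> bool"
    have "u ! k = a k \<or> v ! k = a k" using that assms(5,6) by auto
    then show "\<exists>f\<in>G. \<forall>l\<in>{k}. f ! l = a l" using assms(3,4) by auto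
  qed
  moreover have "shatters G {}" using assms(3) by auto
  ultimately have "{{}, {i}, {j}} \<subseteq> shattered_sets {i, j} G" unfolding shattered_sets_def by auto
  then have "card {{}, {i}, {j}} \<le> card (shattered_sets {i, j} G)" by (intro card_mono) simp_all
  moreover have "card {{}, {i}, {j} :: nat set} = 3" using assms(2) by (simp add: card_insert_if)
  ultimately show ?thesis using assms(1) unfolding shatter_extremal_def by simp
qed

definition projection :: "bool list set \<Rightarrow> bool list set" where
  "projection S = last_slice False S \<union> last_slice True S"

definition reduction :: "bool list set \<Rightarrow> bool list set" where
  "reduction S = last_slice False S \<inter> last_slice True S"

lemma shatters_insert_of_reduction:
  assumes "S \<subseteq> cube (Suc m)" "Y \<subseteq> {..<m}" "shatters (reduction S) Y"
  shows "shatters S (insert m Y)"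
  unfolding shatters_iff
proof
  fix a :: "nat \<Rightarrow> bool"
  obtain y where y: "y \<in> reduction S" "\<forall>i\<in>Y. y ! i = a i"
    using assms(3) unfolding shatters_iff by blast
  then have yS: "y @ [a m] \<in> S" unfolding reduction_def last_slice_def by (cases "a m") auto
  then have "length y = m" using assms(1) unfolding cube_def by auto
  then have "\<forall>i\<in>insert m Y. (y @ [a m]) ! i = a i" using y(2) assms(2) by (auto simp: nth_append)
  then show "\<exists>f\<in>S. \<forall>i\<in>insert m Y. f ! i = a i" using yS by blast
qed

lemma append_nth_last_eqI:
  assumes "g \<in> cube (Suc m)" "w \<in> cube m" "\<And>j. j < m \<Longrightarrow> g ! j = w ! j"
  shows "g = w @ [g ! m]"
proof (rule cube_eqI[OF assms(1)])
  have lw: "length w = m" using assms(2) by (rule length_in_cube)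
  then show "w @ [g ! m] \<in> cube (Suc m)" by (simp add: cube_def)
  show "g ! j = (w @ [g ! m]) ! j" if "j < Suc m" for j
    using that assms(3) lw by (cases "j = m") (auto simp: nth_append)
qed

lemma projection_subset_cube: "S \<subseteq> cube (Suc m) \<Longrightarrow> projection S \<subseteq> cube m"
  using last_slice_subset_cube unfolding projection_def by blast

lemma reduction_subset_projection: "reduction S \<subseteq> projection S"
  unfolding projection_def reduction_def by blast

text \<open>Not usable as a simplification rule: its right-hand side contains an instance of its
  left-hand side.\<close>

lemma level_unique:
  assumes "y \<in> projection S" "y \<notin> reduction S"
  shows "y @ [\<beta>] \<in> S \<longleftrightarrow> \<beta> = (y @ [True] \<in> S)"
  using assms unfolding projection_def reduction_def last_slice_def by (cases \<beta>) auto

lemma fibre_over_face_shatters: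
  assumes "D \<subseteq> {..<m}" "face m D b \<subseteq> projection S"
  shows "shatters (fibre ({..<Suc m} - insert m D) (\<lambda>j. b ! j) S) D"
  unfolding shatters_iff
proof
  fix a :: "nat \<Rightarrow> bool"
  let ?q = "map (\<lambda>j. if j \<in> D then a j else b ! j) [0..<m]"
  have "?q \<in> face m D b" unfolding face_def cube_def by simp
  then obtain \<beta> where "?q @ [\<beta>] \<in> S"
    using assms(2) unfolding projection_def last_slice_def by blast
  then have "?q @ [\<beta>] \<in> fibre ({..<Suc m} - insert m D) (\<lambda>j. b ! j) S"
    unfolding fibre_def by (auto simp: nth_append)
  moreover have "\<forall>j\<in>D. (?q @ [\<beta>]) ! j = a j" using assms(1) by (auto simp: nth_append)
  ultimately show "\<exists>f\<in>fibre ({..<Suc m} - insert m D) (\<lambda>j. b ! j) S. \<forall>j\<in>D. f ! j = a j" by blast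
qed

lemma face_lifts_from_slice:
  assumes "S \<subseteq> cube (Suc m)" "shatters (slice m \<beta> (fibre ({..<Suc m} - insert m D) (\<lambda>j. b ! j) S)) D"
    and q: "q \<in> face m D b"
  shows "q @ [\<beta>] \<in> S"
proof -
  obtain g where g: "g \<in> slice m \<beta> (fibre ({..<Suc m} - insert m D) (\<lambda>j. b ! j) S)"
    "\<forall>j\<in>D. g ! j = q ! j"
    using assms(2) unfolding shatters_iff by blast
  then have gS: "g \<in> S" and gm: "g ! m = \<beta>" and gb: "\<forall>j\<in>{..<Suc m} - insert m D. g ! j = b ! j"
    unfolding slice_def fibre_def by auto
  have qc: "q \<in> cube m" and qb: "\<And>j. j < m \<Longrightarrow> j \<notin> D \<Longrightarrow> q ! j = b ! j"
    using q unfolding face_def by auto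
  have gc: "g \<in> cube (Suc m)" using gS assms(1) by blast
  have "g ! j = q ! j" if "j < m" for j
  proof (cases "j \<in> D")
    case False
    then have "j \<in> {..<Suc m} - insert m D" using that by auto
    then show ?thesis using gb qb[OF that False] by simp
  qed (use g(2) in blast)
  then have "g = q @ [g ! m]" by (rule append_nth_last_eqI[OF gc qc])
  then show ?thesis using gS gm by simp
qed

context
  fixes m d :: nat and S :: "bool list set"
  assumes maximal: "sauer_maximal (Suc m) d S"
begin

text \<open>The projection and the reduction inherit the VC bounds \<open>d\<close> and \<open>d - 1\<close>; their sizes
  add up to \<open>|S|\<close>, so by Sauer's bound both are tight.\<close>

lemma sauer_maximal_projection_reduction:
  assumes "0 < d"
  shows "sauer_maximal m d (projection S)" "sauer_maximal m (d - 1) (reduction S)"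
proof -
  let ?C = "projection S" and ?C' = "reduction S"
  have S: "S \<subseteq> cube (Suc m)" using maximal by (rule sauer_maximal_subset_cube)
  have VC: "card Y \<le> d" if "Y \<subseteq> {..<m}" "shatters ?C Y" for Y
  proof -
    have "shatters S Y" using that shatters_last_slices_iff[OF S that(1)] unfolding projection_def by blast
    moreover have "Y \<subseteq> {..<Suc m}" using that(1) by auto
    ultimately show ?thesis using maximal unfolding sauer_maximal_def by blast
  qed
  have VC': "card Y \<le> d - 1" if Y: "Y \<subseteq> {..<m}" "shatters ?C' Y" for Y
  proof -
    have "insert m Y \<subseteq> {..<Suc m}" using Y(1) by auto
    then have "card (insert m Y) \<le> d"
      using shatters_insert_of_reduction[OF S Y] maximal unfolding sauer_maximal_def by blast
    moreover have "m \<notin> Y" "finite Y" using Y(1) finite_subset by auto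
    ultimately show ?thesis by simp
  qed
  have C: "?C \<subseteq> cube m" "?C' \<subseteq> cube m"
    using projection_subset_cube[OF S] reduction_subset_projection by blast+
  have le: "card ?C \<le> sauer_bound m d" "card ?C' \<le> sauer_bound m (d - 1)"
    using sauer_shelah[OF C(1)] sauer_shelah[OF C(2)] VC VC' by blast+
  have "card S = card ?C + card ?C'"
    using card_last_slices[OF S] card_Un_Int[of "last_slice False S" "last_slice True S"]
      finite_subset[OF C(1)] unfolding projection_def reduction_def by simp
  moreover have "card S = sauer_bound m d + sauer_bound m (d - 1)"
    using maximal sauer_bound_Suc[OF assms] unfolding sauer_maximal_def by simp
  ultimately have "card ?C = sauer_bound m d" "card ?C' = sauer_bound m (d - 1)"
    using le by linarith+
  then show "sauer_maximal m d ?C" "sauer_maximal m (d - 1) ?C'"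
    unfolding sauer_maximal_def using C VC VC' by blast+
qed


lemma fibre_shatter_extremal:
  assumes "Z \<subseteq> {..<Suc m}"
  shows "agree_outside (Suc m) ({..<Suc m} - Z) (fibre Z a S)"
    "shatter_extremal ({..<Suc m} - Z) (fibre Z a S)"
  using shatter_extremal_fibre[OF finite_subset[OF assms] finite_lessThan assms
      agree_outside_cube[OF sauer_maximal_subset_cube[OF maximal]] sauer_maximal_shattered_sets(2)[OF maximal]]
  by blast+

text \<open>The fibre of \<open>S\<close> over all coordinates except \<open>i\<close> and \<open>m\<close> would consist of two points
  differing in both coordinates; such a class shatters three sets, so it is not extremal.\<close>

lemma adjacent_lifts_at_same_level:
  assumes yz: "y \<in> cube m" "z \<in> cube m" "adjacent y z"
    and lifts: "y @ [\<beta>] \<in> S" "z @ [\<not> \<beta>] \<in> S" "y @ [\<not> \<beta>] \<notin> S" "z @ [\<beta>] \<notin> S"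
  shows False
proof -
  have ly: "length y = m" and lz: "length z = m" using yz(1,2) length_in_cube by blast+
  have "card {j. j < length y \<and> y ! j \<noteq> z ! j} = 1" using yz(3) unfolding adjacent_def by blast
  then obtain i where i: "{j. j < length y \<and> y ! j \<noteq> z ! j} = {i}" by (rule card_1_singletonE)
  have im: "i < m" "y ! i \<noteq> z ! i" using i ly by blast+
  have yzj: "y ! j = z ! j" if "j < m" "j \<noteq> i" for j using i ly that by blast
  let ?Z = "{..<Suc m} - {i, m}"
  let ?G = "fibre ?Z (\<lambda>j. y ! j) S"
  have "{..<Suc m} - ?Z = {i, m}" using im by auto
  then have G: "shatter_extremal {i, m} ?G" using fibre_shatter_extremal(2)[of ?Z] by simp
  have in_G: "w @ [\<gamma>] \<in> ?G" if "w @ [\<gamma>] \<in> S" "length w = m" "\<And>j. j < m \<Longrightarrow> j \<noteq> i \<Longrightarrow> w ! j = y ! j"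
    for w \<gamma> using that unfolding fibre_def by (auto simp: nth_append)
  have p1: "y @ [\<beta>] \<in> ?G" using in_G[OF lifts(1) ly] by blast
  have p2: "z @ [\<not> \<beta>] \<in> ?G" using in_G[OF lifts(2) lz] yzj by metis
  have "?G \<subseteq> {y @ [\<beta>], z @ [\<not> \<beta>]}"
  proof
    fix g assume g: "g \<in> ?G"
    then have gS: "g \<in> S" and gy: "\<And>j. j < m \<Longrightarrow> j \<noteq> i \<Longrightarrow> g ! j = y ! j"
      unfolding fibre_def by auto
    have gc: "g \<in> cube (Suc m)" using gS sauer_maximal_subset_cube[OF maximal] by blast
    show "g \<in> {y @ [\<beta>], z @ [\<not> \<beta>]}"
    proof (cases "g ! i = y ! i")
      case True
      then have "g = y @ [g ! m]" using append_nth_last_eqI[OF gc yz(1)] gy by metis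
      then show ?thesis using gS lifts(3) by (cases "g ! m = \<beta>") auto
    next
      case False
      then have "g ! i = z ! i" using im(2) by auto
      then have "g = z @ [g ! m]" using append_nth_last_eqI[OF gc yz(2)] gy yzj by metis
      then show ?thesis using gS lifts(4) by (cases "g ! m = \<beta>") auto
    qed
  qed
  then have "card ?G \<le> 2" using card_mono[of "{y @ [\<beta>], z @ [\<not> \<beta>]}" ?G] card_insert_le by fastforce
  moreover have "2 < card ?G"
    by (rule two_shattered_singletons[OF G _ p1 p2]) (use im ly lz in \<open>auto simp: nth_append\<close>)
  ultimately show False by simp
qed

text \<open>The fibre of \<open>S\<close> over the coordinates fixed by a face of the projection shatters the free
  coordinates \<open>D\<close>, hence so does one of its two levels, which then contains the whole lifted face.\<close>

lemma subcube_lifts_to_one_level: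
  assumes "is_subcube m e (projection S) Q"
  obtains \<beta> where "\<forall>q\<in>Q. q @ [\<beta>] \<in> S"
proof -
  obtain D b where D: "D \<subseteq> {..<m}" and Q: "Q = face m D b" and QC: "Q \<subseteq> projection S"
    using assms unfolding is_subcube_iff_face by blast
  let ?Z = "{..<Suc m} - insert m D"
  have "{..<Suc m} - ?Z = insert m D" using D by auto
  then have "agree_outside (Suc m) (insert m D) (fibre ?Z (\<lambda>j. b ! j) S)"
    "shatter_extremal (insert m D) (fibre ?Z (\<lambda>j. b ! j) S)"
    using fibre_shatter_extremal[of ?Z] by simp_all
  then obtain \<beta> where "shatters (slice m \<beta> (fibre ?Z (\<lambda>j. b ! j) S)) D"
    using shatter_extremal_slice_shatters[OF finite_subset[OF D finite_lessThan]]
      fibre_over_face_shatters[OF D QC[unfolded Q]] D by blast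
  then have "\<forall>q\<in>Q. q @ [\<beta>] \<in> S"
    using face_lifts_from_slice[OF sauer_maximal_subset_cube[OF maximal]] unfolding Q by blast
  then show ?thesis by (rule that)
qed

lemma level_constant_on_paths:
  assumes "connected_in (projection S - reduction S) u v"
  shows "(u @ [True] \<in> S) = (v @ [True] \<in> S)"
  using assms unfolding connected_in_def
proof (induction rule: rtranclp_induct)
  case (step y z)
  have y: "y \<in> projection S" "y \<notin> reduction S" and z: "z \<in> projection S" "z \<notin> reduction S"
    and adj: "adjacent y z" using step.hyps(2) by auto
  have yz: "y \<in> cube m" "z \<in> cube m" using y(1) z(1) projection_subset_cube[OF sauer_maximal_subset_cube[OF maximal]] by blast+
  have "(y @ [True] \<in> S) = (z @ [True] \<in> S)"
  proof (rule ccontr)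
    assume ne: "(y @ [True] \<in> S) \<noteq> (z @ [True] \<in> S)"
    let ?\<beta> = "y @ [True] \<in> S"
    have "y @ [?\<beta>] \<in> S" "y @ [\<not> ?\<beta>] \<notin> S"
      using level_unique[OF y, of ?\<beta>] level_unique[OF y, of "\<not> ?\<beta>"] by simp_all
    moreover have "z @ [\<not> ?\<beta>] \<in> S" "z @ [?\<beta>] \<notin> S"
      using level_unique[OF z, of ?\<beta>] level_unique[OF z, of "\<not> ?\<beta>"] ne by simp_all
    ultimately show False using adjacent_lifts_at_same_level[OF yz adj] by blast
  qed
  then show ?case using step.IH by simp
qed simp

lemma level_constant_on_subcubes:
  assumes "is_subcube m d (projection S) Q" "y \<in> Q" "y \<notin> reduction S" "z \<in> Q" "z \<notin> reduction S"
  shows "(y @ [True] \<in> S) = (z @ [True] \<in> S)"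
proof -
  obtain \<beta> where \<beta>: "\<forall>q\<in>Q. q @ [\<beta>] \<in> S" using subcube_lifts_to_one_level[OF assms(1)] by blast
  have "Q \<subseteq> projection S" using assms(1) unfolding is_subcube_def by blast
  then have "y \<in> projection S" "z \<in> projection S" using assms(2,4) by blast+
  moreover have "y @ [\<beta>] \<in> S" "z @ [\<beta>] \<in> S" using \<beta> assms(2,4) by blast+
  ultimately show ?thesis using level_unique[of y S \<beta>] level_unique[of z S \<beta>] assms(3,5) by simp
qed

lemma level_constant_on_components:
  assumes "K \<in> components m d (projection S) (reduction S)"
    and "y \<in> K" "y \<notin> reduction S" "z \<in> K" "z \<notin> reduction S"
  shows "(y @ [True] \<in> S) = (z @ [True] \<in> S)"
proof -
  let ?R = "cube_link m d (projection S) (reduction S)"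
  have chain: "\<forall>y\<in>Q - reduction S. \<forall>z\<in>Q' - reduction S. (y @ [True] \<in> S) = (z @ [True] \<in> S)"
    if "?R\<^sup>*\<^sup>* Q Q'" "is_subcube m d (projection S) Q" for Q Q'
    using that
  proof (induction rule: rtranclp_induct)
    case base
    then show ?case using level_constant_on_subcubes by blast
  next
    case (step Q2 Q3)
    have Q3: "is_subcube m d (projection S) Q3" and link: "avoid_conn (projection S) (reduction S) Q2 Q3"
      using step.hyps(2) unfolding cube_link_def by blast+
    obtain u v where uv: "u \<in> Q2" "v \<in> Q3" "u \<in> projection S - reduction S"
      "v \<in> projection S - reduction S" "connected_in (projection S - reduction S) u v"
      using link unfolding avoid_conn_iff by blast
    have "(u @ [True] \<in> S) = (v @ [True] \<in> S)" using level_constant_on_paths[OF uv(5)] .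
    moreover have "\<forall>y\<in>Q - reduction S. (y @ [True] \<in> S) = (u @ [True] \<in> S)"
      using step.IH step.prems uv(1,3) by blast
    moreover have "\<forall>z\<in>Q3 - reduction S. (v @ [True] \<in> S) = (z @ [True] \<in> S)"
      using level_constant_on_subcubes[OF Q3] uv(2,4) by blast
    ultimately show ?case by simp
  qed
  obtain Q Qa where "K = \<Union>{Q'. ?R\<^sup>*\<^sup>* Q Q'}" "?R\<^sup>*\<^sup>* Q Qa" "y \<in> Qa"
    "is_subcube m d (projection S) Qa"
    using assms(1,2) by (rule mem_componentE)
  moreover obtain Qb where "?R\<^sup>*\<^sup>* Q Qb" "z \<in> Qb" using assms(4) calculation(1) by blast
  ultimately have "?R\<^sup>*\<^sup>* Qa Qb" "y \<in> Qa" "z \<in> Qb" "is_subcube m d (projection S) Qa"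
    using cube_link_rtranclp_sym rtranclp_trans by metis+
  then show ?thesis using chain assms(3,5) by blast
qed

lemma level_of_component:
  assumes "K \<in> components m d (projection S) (reduction S)" "y \<in> K" "y \<notin> reduction S"
  shows "((SOME y. y \<in> K \<and> y \<notin> reduction S) @ [True] \<in> S) = (y @ [True] \<in> S)"
proof -
  have "(SOME y. y \<in> K \<and> y \<notin> reduction S) \<in> K \<and> (SOME y. y \<in> K \<and> y \<notin> reduction S) \<notin> reduction S"
    using assms(2,3) by (intro someI_ex[of "\<lambda>y. y \<in> K \<and> y \<notin> reduction S"]) blast
  then show ?thesis using level_constant_on_components[OF assms(1) _ _ assms(2,3)] by blast
qed

theorem glue_projection_reduction:
  assumes covered: "\<And>y. y \<in> projection S \<Longrightarrow> \<exists>Q. is_subcube m d (projection S) Q \<and> y \<in> Q"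
  defines "p \<equiv> \<lambda>K. (SOME y. y \<in> K \<and> y \<notin> reduction S) @ [True] \<in> S"
  shows "S = glue m d (projection S) (reduction S) p"
proof (rule set_eqI)
  let ?C = "projection S" and ?C' = "reduction S"
  have p: "p K = (y @ [True] \<in> S)" if "K \<in> components m d ?C ?C'" "y \<in> K" "y \<notin> ?C'" for K y
    unfolding p_def using level_of_component[OF that] .
  fix s
  show "s \<in> S \<longleftrightarrow> s \<in> glue m d ?C ?C' p"
  proof (cases "s \<in> cube (Suc m)")
    case False
    have S: "S \<subseteq> cube (Suc m)" using maximal by (rule sauer_maximal_subset_cube)
    then have "glue m d ?C ?C' p \<subseteq> cube (Suc m)"
      using glue_subset_cube[OF projection_subset_cube reduction_subset_projection] by blast
    then show ?thesis using S False by blast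
  next
    case True
    then obtain y \<beta> where s: "s = y @ [\<beta>]" using cube_Suc_iff by blast
    show ?thesis
    proof (cases "y \<in> ?C'")
      case True
      then show ?thesis unfolding s mem_glue_iff reduction_def last_slice_def by (cases \<beta>) auto
    next
      case False
      show ?thesis
      proof
        assume "s \<in> S"
        then have y: "y \<in> ?C" unfolding s projection_def last_slice_def by (cases \<beta>) auto
        obtain Q where Q: "is_subcube m d ?C Q" "y \<in> Q" using covered[OF y] by blast
        obtain K where "K \<in> components m d ?C ?C'" "Q \<subseteq> K" by (rule subcube_subset_component[OF Q(1)])
        then have "K \<in> components m d ?C ?C'" "y \<in> K" using Q(2) by blast+
        moreover have "\<beta> = (y @ [True] \<in> S)" using level_unique[OF y False, of \<beta>] \<open>s \<in> S\<close> s by simp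
        ultimately show "s \<in> glue m d ?C ?C' p" using p False unfolding s mem_glue_iff by blast
      next
        assume "s \<in> glue m d ?C ?C' p"
        then obtain K where K: "K \<in> components m d ?C ?C'" "y \<in> K" "p K = \<beta>"
          using False unfolding s mem_glue_iff by blast
        then have "y \<in> ?C" using component_subset by blast
        then show "s \<in> S"
          using p[OF K(1,2) False] K(3) level_unique[OF _ False, of \<beta>] unfolding s by simp
      qed
    qed
  qed
qed

end


lemma singleton_shatters_only_empty:
  assumes "shatters {v} Y"
  shows "Y = {}"
proof (rule ccontr)
  assume "Y \<noteq> {}"
  then obtain y where "y \<in> Y" by blast
  obtain f where "f \<in> {v}" "\<forall>i\<in>Y. f ! i = (\<not> v ! i)"
    using assms unfolding shatters_iff by blast
  then show False using \<open>y \<in> Y\<close> by simp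
qed

lemma M_0_eq_sauer_maximal: "M n 0 = {C. sauer_maximal n 0 C}"
proof (rule set_eqI, rule iffI)
  fix C assume "C \<in> M n 0"
  then obtain v where v: "C = {v}" "v \<in> cube n" unfolding M_0 by blast
  have "card Y \<le> 0" if "shatters C Y" for Y
    using singleton_shatters_only_empty[of v Y] that v(1) by simp
  then show "C \<in> {C. sauer_maximal n 0 C}"
    using v unfolding sauer_maximal_def sauer_bound_0 by simp
next
  fix C assume "C \<in> {C. sauer_maximal n 0 C}"
  then have "C \<subseteq> cube n" "card C = 1" unfolding sauer_maximal_def sauer_bound_0 by simp_all
  moreover obtain v where "C = {v}" using \<open>card C = 1\<close> by (rule card_1_singletonE)
  ultimately show "C \<in> M n 0" unfolding M_0 by blast
qed

lemma M_diag_eq_sauer_maximal: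
  assumes "0 < n"
  shows "M n n = {C. sauer_maximal n n C}"
proof (rule set_eqI)
  fix C
  have "card Y \<le> n" if "Y \<subseteq> {..<n}" for Y using card_mono[OF _ that] by simp
  then have "sauer_maximal n n C \<longleftrightarrow> C \<subseteq> cube n \<and> card C = card (cube n)"
    unfolding sauer_maximal_def sauer_bound_self card_cube by blast
  also have "\<dots> \<longleftrightarrow> C = cube n" using card_subset_eq[OF finite_cube] by blast
  finally show "C \<in> M n n \<longleftrightarrow> C \<in> {C. sauer_maximal n n C}" using M_diag[OF assms] by simp
qed

lemma M_Suc_eq_sauer_maximal:
  assumes d: "0 < d" "d \<le> m" and IH: "\<And>e. e \<le> m \<Longrightarrow> M m e = {C. sauer_maximal m e C}"
  shows "M (Suc m) d = {C. sauer_maximal (Suc m) d C}"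
proof (rule set_eqI, rule iffI)
  have d': "0 < d" "d < Suc m" "d - 1 \<le> m" using d by simp_all
  have covered: "\<exists>Q. is_subcube m d C Q \<and> y \<in> Q" if "C \<in> M m d" "y \<in> C" for C y
    by (rule M_covered_by_subcubes[OF d(2) that])
  fix S
  show "S \<in> {C. sauer_maximal (Suc m) d C}" if S_in: "S \<in> M (Suc m) d"
  proof -
    obtain C C' p where S: "S = glue m d C C' p"
      and C: "C \<in> M m d" "C' \<in> M m (d - 1)" and sub: "C' \<subseteq> C"
      using S_in unfolding M_Suc[OF d'(1,2)] by blast
    have "sauer_maximal m d C" "sauer_maximal m (d - 1) C'"
      using IH[OF d(2)] IH[OF d'(3)] C by blast+
    with sub covered[OF C(1)] d(1) have "sauer_maximal (Suc m) d (glue m d C C' p)"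
      by (rule sauer_maximal_glue)
    then show ?thesis using S by simp
  qed
  show "S \<in> M (Suc m) d" if "S \<in> {C. sauer_maximal (Suc m) d C}"
  proof -
    have S: "sauer_maximal (Suc m) d S" using that by simp
    have "projection S \<in> M m d" "reduction S \<in> M m (d - 1)"
      using sauer_maximal_projection_reduction[OF S d(1)] IH[OF d(2)] IH[OF d'(3)] by blast+
    then show ?thesis
      unfolding M_Suc[OF d'(1,2)]
      using glue_projection_reduction[OF S covered] reduction_subset_projection by blast
  qed
qed

theorem M_eq_sauer_maximal: "d \<le> n \<Longrightarrow> M n d = {C. sauer_maximal n d C}"
proof (induction n arbitrary: d)
  case 0
  then show ?case using M_0_eq_sauer_maximal by simp
next
  case (Suc m)
  consider "d = 0" | "d = Suc m" | "0 < d" "d \<le> m" using Suc.prems by linarith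
  then show ?case
  proof cases
    case 1
    then show ?thesis using M_0_eq_sauer_maximal by simp
  next
    case 2
    then show ?thesis using M_diag_eq_sauer_maximal[of "Suc m"] by simp
  next
    case 3
    then show ?thesis using M_Suc_eq_sauer_maximal Suc.IH by blast
  qed
qed

theorem lemma2:
  fixes n d :: nat
  assumes "1 \<le> d" and "d \<le> n"
  shows "M n d = {C. maximum_class n d C}"
  using M_eq_sauer_maximal[OF assms(2)] maximum_class_iff_sauer_maximal[OF assms(2)] by simp

end
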